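(* Let $G$ be a graph with at least two vertices and let $k$ be an integer with $k\ge k(G)$. Then there exists an acyclic digraph $D$ such that (a) $C(D)=G\cup I_k$; (b) $D$ has an acyclic ordering $v_1,\dots,v_{|V(G)|},v_{|V(G)|+1},\dots,v_{|V(G)|+k}$ where $V(G)=\{v_1,\dots,v_{|V(G)|}\}$ and $V(I_k)=\{v_{|V(G)|+1},\dots,v_{|V(G)|+k}\}$; and (c) $N_D^-(v_1)=N_D^-(v_2)=\emptyset$.
   Context: All graphs are finite and simple. For a digraph $D$, its competition graph $C(D)$ is the graph with vertex set $V(D)$ in which two distinct vertices $u,v$ are adjacent iff there is a vertex $x$ with arcs $(u,x),(v,x)\in A(D)$. The competition number $k(G)$ is the smallest nonnegative integer $k$ such that $G$ together with $k$ new isolated vertices is the competition graph of an acyclic digraph. $I_k$ denotes the edgeless graph on $k$ vertices, and $G\cup I_k$ is the disjoint union of $G$ with $k$ new isolated vertices. An acyclic ordering of a digraph $D$ is an ordering $v_1,\dots,v_{|V(D)|}$ of its vertices such that $(v_i,v_j)\in A(D)$ implies $i<j$. $N_D^-(v)=\{x:(x,v)\in A(D)\}$ is the in-neighborhood. *)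

theory Defs
  imports Main
begin

definition simple_graph :: "'a set \<Rightarrow> ('a \<Rightarrow> 'a \<Rightarrow> bool) \<Rightarrow> bool" where
  "simple_graph V E \<longleftrightarrow> finite V \<and> (\<forall>u v. E u v \<longrightarrow> u \<in> V \<and> v \<in> V \<and> u \<noteq> v \<and> E v u)"

definition digraph :: "'b set \<Rightarrow> ('b \<times> 'b) set \<Rightarrow> bool" where
  "digraph W A \<longleftrightarrow> A \<subseteq> W \<times> W"

definition acyclic_digraph :: "'b set \<Rightarrow> ('b \<times> 'b) set \<Rightarrow> bool" where
  "acyclic_digraph W A \<longleftrightarrow> digraph W A \<and> acyclic A"

definition comp_adj :: "('b \<times> 'b) set \<Rightarrow> 'b \<Rightarrow> 'b \<Rightarrow> bool" where
  "comp_adj A u v \<longleftrightarrow> u \<noteq> v \<and> (\<exists>x. (u, x) \<in> A \<and> (v, x) \<in> A)"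

(* G \<union> I_k: vertices Inl v (v \<in> V) and the k new isolated vertices Inr i (i < k) *)
definition union_verts :: "'a set \<Rightarrow> nat \<Rightarrow> ('a + nat) set" where
  "union_verts V k = Inl ` V \<union> Inr ` {..<k}"

fun union_edges :: "('a \<Rightarrow> 'a \<Rightarrow> bool) \<Rightarrow> ('a + nat) \<Rightarrow> ('a + nat) \<Rightarrow> bool" where
  "union_edges E (Inl u) (Inl v) = E u v"
| "union_edges E _ _ = False"

definition competition_graph_is :: "'b set \<Rightarrow> ('b \<times> 'b) set \<Rightarrow> ('b \<Rightarrow> 'b \<Rightarrow> bool) \<Rightarrow> bool" where
  "competition_graph_is W A F \<longleftrightarrow> (\<forall>u\<in>W. \<forall>v\<in>W. comp_adj A u v \<longleftrightarrow> F u v)"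

definition competition_number :: "'a set \<Rightarrow> ('a \<Rightarrow> 'a \<Rightarrow> bool) \<Rightarrow> nat" where
  "competition_number V E = (LEAST k. \<exists>A. acyclic_digraph (union_verts V k) A
       \<and> competition_graph_is (union_verts V k) A (union_edges E))"

(* acyclic ordering v_1..v_m of D = (W, A), as a list (index 0 is v_1) *)
definition acyclic_ordering :: "'b set \<Rightarrow> ('b \<times> 'b) set \<Rightarrow> 'b list \<Rightarrow> bool" where
  "acyclic_ordering W A vs \<longleftrightarrow> distinct vs \<and> set vs = W \<and>
     (\<forall>i j. i < length vs \<longrightarrow> j < length vs \<longrightarrow> (vs ! i, vs ! j) \<in> A \<longrightarrow> i < j)"

definition in_nbhd :: "('b \<times> 'b) set \<Rightarrow> 'b \<Rightarrow> 'b set" where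
  "in_nbhd A v = {x. (x, v) \<in> A}"

end

theory Submission
  imports Defs
begin

text \<open>Take an optimal digraph for \<open>G \<union> I\<^sub>k\<^sub>0\<close> and delete every arc whose head has no other
  in-neighbour; such arcs create no competition, so the competition graph is unchanged, and now
  every in-neighbourhood is empty or has at least two elements. Every remaining arc has a tail that
  competes with some vertex, hence lies in \<open>G\<close>. Sorting the vertices of \<open>G\<close> topologically and
  putting the isolated vertices (which have no out-arcs) at the end gives an acyclic ordering;
  the in-neighbours of \<open>v\<^sub>1\<close> and \<open>v\<^sub>2\<close> lie among the vertices before them, so \<open>N\<^sup>-(v\<^sub>1) = \<emptyset>\<close> and
  \<open>N\<^sup>-(v\<^sub>2) \<subseteq> {v\<^sub>1}\<close>, which forces \<open>N\<^sup>-(v\<^sub>2) = \<emptyset>\<close>.\<close>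

lemma wf_imp_acyclic_ordering:
  assumes "finite S" "wf R"
  shows "\<exists>vs. acyclic_ordering S R vs"
  using assms(1)
proof (induction "card S" arbitrary: S)
  case 0
  then show ?case by (auto simp: acyclic_ordering_def)
next
  case (Suc m)
  then have "S \<noteq> {}" by auto
  then obtain x where x: "x \<in> S" and x_min: "\<And>y. (y, x) \<in> R \<Longrightarrow> y \<notin> S"
    using wfE_min[OF assms(2)] by blast
  have "m = card (S - {x})" using Suc.hyps(2) Suc.prems x by simp
  then obtain vs where vs: "acyclic_ordering (S - {x}) R vs"
    using Suc.hyps(1) Suc.prems by blast
  have "acyclic_ordering S R (x # vs)"
    unfolding acyclic_ordering_def
  proof (intro conjI allI impI)
    show "distinct (x # vs)" "set (x # vs) = S"
      using vs x by (auto simp: acyclic_ordering_def)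
    fix i j
    assume ij: "i < length (x # vs)" "j < length (x # vs)" "((x # vs) ! i, (x # vs) ! j) \<in> R"
    show "i < j"
    proof (cases j)
      case 0
      have "(x # vs) ! i \<in> S" using ij(1) \<open>set (x # vs) = S\<close> nth_mem by blast
      then show ?thesis using ij(3) 0 x_min by auto
    next
      case (Suc j')
      then show ?thesis
        using ij vs by (cases i) (auto simp: acyclic_ordering_def)
    qed
  qed
  then show ?case by blast
qed

lemma acyclic_ordering_append:
  assumes "acyclic_ordering S A xs" "acyclic_ordering T A ys" "S \<inter> T = {}"
    and "\<And>a b. a \<in> T \<Longrightarrow> b \<in> S \<Longrightarrow> (a, b) \<notin> A"
  shows "acyclic_ordering (S \<union> T) A (xs @ ys)"
  unfolding acyclic_ordering_def
proof (intro conjI allI impI)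
  have xs: "distinct xs" "set xs = S" and ys: "distinct ys" "set ys = T"
    using assms(1,2) unfolding acyclic_ordering_def by blast+
  show "distinct (xs @ ys)" "set (xs @ ys) = S \<union> T"
    using xs ys assms(3) by auto
  fix i j
  assume ij: "i < length (xs @ ys)" "j < length (xs @ ys)" "((xs @ ys) ! i, (xs @ ys) ! j) \<in> A"
  let ?n = "length xs"
  consider "i < ?n" "j < ?n" | "i < ?n" "j \<ge> ?n" | "i \<ge> ?n" "j < ?n" | "i \<ge> ?n" "j \<ge> ?n"
    by linarith
  then show "i < j"
  proof cases
    case 1
    then show ?thesis using ij assms(1) by (simp add: acyclic_ordering_def nth_append)
  next
    case 3
    then have "(xs @ ys) ! i \<in> T" "(xs @ ys) ! j \<in> S"
      using ij(1) xs ys by (auto simp: nth_append)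
    then show ?thesis using ij(3) assms(4) by blast
  next
    case 4
    then have "(ys ! (i - ?n), ys ! (j - ?n)) \<in> A" "i - ?n < length ys" "j - ?n < length ys"
      using ij by (simp_all add: nth_append)
    then have "i - ?n < j - ?n" using assms(2) by (simp add: acyclic_ordering_def)
    then show ?thesis by linarith
  qed simp
qed

lemma acyclic_ordering_in_nbhd_subset_take:
  assumes "acyclic_ordering W A vs" "digraph W A" "j < length vs"
  shows "in_nbhd A (vs ! j) \<subseteq> set (take j vs)"
proof
  fix x
  assume "x \<in> in_nbhd A (vs ! j)"
  then have arc: "(x, vs ! j) \<in> A" by (simp add: in_nbhd_def)
  then have "x \<in> set vs" using assms(1,2) by (auto simp: digraph_def acyclic_ordering_def)
  then obtain i where i: "i < length vs" "vs ! i = x" by (auto simp: in_set_conv_nth)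
  then have "i < j" using arc assms(1,3) by (auto simp: acyclic_ordering_def)
  then show "x \<in> set (take j vs)" using i by (auto simp: in_set_conv_nth)
qed

lemma simple_graphD:
  assumes "simple_graph V E"
  shows "finite V" and "E u v \<Longrightarrow> u \<in> V \<and> v \<in> V \<and> u \<noteq> v \<and> E v u"
  using assms unfolding simple_graph_def by blast+

lemma bipartite_imp_acyclic:
  assumes "R \<subseteq> X \<times> Y" "X \<inter> Y = {}"
  shows "acyclic R"
proof -
  have "(x, y) \<in> R\<^sup>+ \<Longrightarrow> x \<in> X \<and> y \<in> Y" for x y
    by (induction rule: trancl_induct) (use assms(1) in blast)+
  then show ?thesis unfolding acyclic_def using assms(2) by blast
qed

lemma simple_graph_union_edgesD:
  assumes "simple_graph V E" "union_edges E p q"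
  obtains u v where "p = Inl u" "q = Inl v" "E u v" "u \<in> V" "v \<in> V"
proof -
  obtain u v where "p = Inl u" "q = Inl v" "E u v"
    using assms(2) by (cases p; cases q) auto
  then show thesis using that simple_graphD(2)[OF assms(1)] by blast
qed

lemma competition_representation_exists:
  assumes G: "simple_graph V E"
  shows "\<exists>k A. acyclic_digraph (union_verts V k) A
           \<and> competition_graph_is (union_verts V k) A (union_edges E)"
proof -
  define P where "P = {(u, v). E u v}"
  note E_sym = simple_graphD(2)[OF G]
  have "P \<subseteq> V \<times> V" using E_sym by (auto simp: P_def)
  then have "finite P"
    using simple_graphD(1)[OF G] by (blast intro: finite_subset finite_cartesian_product)
  then obtain g where g: "bij_betw g P {0..<card P}"
    using ex_bij_betw_finite_nat by blast
  \<comment> \<open>each edge \<open>uv\<close> gets its own prey \<open>Inr (g (u, v))\<close>, shared by \<open>u\<close> and \<open>v\<close> only\<close>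
  define A :: "(('a + nat) \<times> ('a + nat)) set"
    where "A = {(Inl w, Inr (g (u, v))) | w u v. E u v \<and> (w = u \<or> w = v)}"
  let ?W = "union_verts V (card P)"
  have "A \<subseteq> ?W \<times> ?W"
  proof
    fix x assume "x \<in> A"
    then obtain w u v where "x = (Inl w, Inr (g (u, v)))" "E u v" "w = u \<or> w = v"
      unfolding A_def by blast
    moreover have "g (u, v) < card P"
      using bij_betw_apply[OF g] \<open>E u v\<close> unfolding P_def by simp
    ultimately show "x \<in> ?W \<times> ?W" using E_sym unfolding union_verts_def by blast
  qed
  moreover have "acyclic A"
    by (rule bipartite_imp_acyclic[of A "range Inl" "range Inr"]) (auto simp: A_def)
  moreover have "comp_adj A p q \<longleftrightarrow> union_edges E p q" for p q
  proof
    assume "comp_adj A p q"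
    then obtain x where pq: "p \<noteq> q" "(p, x) \<in> A" "(q, x) \<in> A" by (auto simp: comp_adj_def)
    from pq(2) obtain a u v where a: "p = Inl a" "x = Inr (g (u, v))" "E u v" "a = u \<or> a = v"
      unfolding A_def by blast
    from pq(3) obtain b u' v' where b: "q = Inl b" "x = Inr (g (u', v'))" "E u' v'" "b = u' \<or> b = v'"
      unfolding A_def by blast
    have "(u, v) \<in> P" "(u', v') \<in> P" "g (u, v) = g (u', v')"
      using a(2,3) b(2,3) unfolding P_def by simp_all
    then have "(u, v) = (u', v')" using bij_betw_imp_inj_on[OF g] by (blast dest: inj_onD)
    then show "union_edges E p q" using a b pq(1) E_sym by auto
  next
    assume "union_edges E p q"
    then obtain a b where "p = Inl a" "q = Inl b" "E a b"
      using G by (auto elim: simple_graph_union_edgesD)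
    then show "comp_adj A p q"
      using E_sym unfolding A_def comp_adj_def by blast
  qed
  ultimately show ?thesis
    unfolding acyclic_digraph_def digraph_def competition_graph_is_def by blast
qed

lemma competition_number_attained:
  assumes "simple_graph V E"
  shows "\<exists>A. acyclic_digraph (union_verts V (competition_number V E)) A
           \<and> competition_graph_is (union_verts V (competition_number V E)) A (union_edges E)"
  unfolding competition_number_def
  by (rule LeastI_ex) (use competition_representation_exists[OF assms] in blast)

lemma competition_graph_union_verts_mono:
  assumes "competition_graph_is (union_verts V k0) A (union_edges E)"
    and "digraph (union_verts V k0) A" "k0 \<le> k"
  shows "competition_graph_is (union_verts V k) A (union_edges E)"
  unfolding competition_graph_is_def
proof (intro ballI)
  fix u v
  assume uv: "u \<in> union_verts V k" "v \<in> union_verts V k"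
  show "comp_adj A u v \<longleftrightarrow> union_edges E u v"
  proof (cases "u \<in> union_verts V k0 \<and> v \<in> union_verts V k0")
    case True
    then show ?thesis using assms(1) by (simp add: competition_graph_is_def)
  next
    case False
    then have "\<not> comp_adj A u v" using assms(2) by (auto simp: comp_adj_def digraph_def)
    moreover have "\<not> union_edges E u v"
      using False uv by (cases u; cases v) (auto simp: union_verts_def)
    ultimately show ?thesis by blast
  qed
qed

definition prune_arcs :: "('b \<times> 'b) set \<Rightarrow> ('b \<times> 'b) set" where
  "prune_arcs A = {(a, b) \<in> A. \<exists>c. c \<noteq> a \<and> (c, b) \<in> A}"

lemma mem_prune_arcs_iff: "(a, b) \<in> prune_arcs A \<longleftrightarrow> (a, b) \<in> A \<and> (\<exists>c. c \<noteq> a \<and> (c, b) \<in> A)"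
  by (simp add: prune_arcs_def)

lemma prune_arcs_subset: "prune_arcs A \<subseteq> A"
  by (auto simp: prune_arcs_def)

lemma comp_adj_prune_arcs: "comp_adj (prune_arcs A) = comp_adj A"
  unfolding comp_adj_def mem_prune_arcs_iff fun_eq_iff by metis

lemma prune_arcs_in_nbhd_not_singleton: "in_nbhd (prune_arcs A) v \<noteq> {x}"
proof
  assume single: "in_nbhd (prune_arcs A) v = {x}"
  then obtain c where "c \<noteq> x" "(c, v) \<in> A" "(x, v) \<in> A"
    unfolding in_nbhd_def mem_prune_arcs_iff by blast
  then have "c \<in> in_nbhd (prune_arcs A) v" unfolding in_nbhd_def mem_prune_arcs_iff by auto
  with single \<open>c \<noteq> x\<close> show False by blast
qed

lemma prune_arcs_tail_competes:
  assumes "(a, b) \<in> prune_arcs A"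
  shows "\<exists>c. comp_adj A a c"
  using assms unfolding mem_prune_arcs_iff comp_adj_def by auto

lemma pruned_competition_digraph_exists:
  assumes G: "simple_graph V E" and k: "competition_number V E \<le> k"
  obtains A where "acyclic_digraph (union_verts V k) A"
    "competition_graph_is (union_verts V k) A (union_edges E)"
    "\<And>a b. (a, b) \<in> A \<Longrightarrow> a \<in> Inl ` V" "\<And>v x. in_nbhd A v \<noteq> {x}"
proof -
  let ?k0 = "competition_number V E"
  obtain A0 where A0: "acyclic_digraph (union_verts V ?k0) A0"
    "competition_graph_is (union_verts V ?k0) A0 (union_edges E)"
    using competition_number_attained[OF G] by blast
  have digraph_A0: "digraph (union_verts V ?k0) A0"
    using A0(1) by (simp add: acyclic_digraph_def)
  have "digraph (union_verts V k) (prune_arcs A0)"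
    using digraph_A0 k prune_arcs_subset
    unfolding digraph_def union_verts_def by fastforce
  moreover have "acyclic (prune_arcs A0)"
    using A0(1) prune_arcs_subset acyclic_subset unfolding acyclic_digraph_def by blast
  moreover have "competition_graph_is (union_verts V k) (prune_arcs A0) (union_edges E)"
    using competition_graph_union_verts_mono[OF A0(2) digraph_A0 k]
    by (simp add: comp_adj_prune_arcs competition_graph_is_def)
  moreover have "a \<in> Inl ` V" if arc: "(a, b) \<in> prune_arcs A0" for a b
  proof -
    obtain c where "comp_adj A0 a c"
      using prune_arcs_tail_competes[OF arc] by blast
    moreover have "a \<in> union_verts V ?k0" "c \<in> union_verts V ?k0"
      using calculation digraph_A0 by (auto simp: comp_adj_def digraph_def)
    ultimately have "union_edges E a c"
      using A0(2) by (simp add: competition_graph_is_def)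
    then show ?thesis using G by (auto elim: simple_graph_union_edgesD)
  qed
  ultimately show thesis
    using prune_arcs_in_nbhd_not_singleton by (intro that) (simp_all add: acyclic_digraph_def)
qed

lemma acyclic_ordering_graph_vertices_first:
  assumes "finite V" "acyclic_digraph (union_verts V k) A"
    and tails: "\<And>a b. (a, b) \<in> A \<Longrightarrow> a \<in> Inl ` V"
  obtains vs where "acyclic_ordering (union_verts V k) A vs"
    "set (take (card V) vs) = Inl ` V" "set (drop (card V) vs) = Inr ` {..<k}"
proof -
  have "finite (union_verts V k)" using assms(1) by (simp add: union_verts_def)
  then have "finite A"
    using assms(2) unfolding acyclic_digraph_def digraph_def
    by (blast intro: finite_subset finite_cartesian_product)
  then have "wf A"
    using assms(2) finite_acyclic_wf unfolding acyclic_digraph_def by blast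
  then obtain xs where xs: "acyclic_ordering (Inl ` V) A xs"
    using wf_imp_acyclic_ordering assms(1) by blast
  have ys: "acyclic_ordering (Inr ` {..<k}) A (map Inr [0..<k])"
    using tails by (auto simp: acyclic_ordering_def distinct_map)
  have set_xs: "set xs = Inl ` V" and len_xs: "card V = length xs"
    using xs distinct_card card_image[OF inj_on_subset[OF inj_Inl]]
    by (metis acyclic_ordering_def subset_UNIV)+
  show thesis
  proof (rule that)
    show "acyclic_ordering (union_verts V k) A (xs @ map Inr [0..<k])"
      using acyclic_ordering_append[OF xs ys] tails unfolding union_verts_def by blast
    show "set (take (card V) (xs @ map Inr [0..<k])) = Inl ` V"
      using set_xs len_xs by simp
    show "set (drop (card V) (xs @ map Inr [0..<k])) = Inr ` {..<k}"
      using len_xs by (simp add: lessThan_atLeast0)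
  qed
qed

theorem lemma2p2:
  fixes V :: "'a set" and E :: "'a \<Rightarrow> 'a \<Rightarrow> bool" and k :: nat
  assumes "simple_graph V E"
    and "card V \<ge> 2"
    and "k \<ge> competition_number V E"
  shows "\<exists>A. acyclic_digraph (union_verts V k) A
           \<and> competition_graph_is (union_verts V k) A (union_edges E)
           \<and> (\<exists>vs. acyclic_ordering (union_verts V k) A vs
                  \<and> set (take (card V) vs) = Inl ` V
                  \<and> set (drop (card V) vs) = Inr ` {..<k}
                  \<and> in_nbhd A (vs ! 0) = {} \<and> in_nbhd A (vs ! 1) = {})"
proof -
  obtain A where A: "acyclic_digraph (union_verts V k) A"
    "competition_graph_is (union_verts V k) A (union_edges E)"
    "\<And>a b. (a, b) \<in> A \<Longrightarrow> a \<in> Inl ` V" "\<And>v x. in_nbhd A v \<noteq> {x}"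
    using pruned_competition_digraph_exists[OF assms(1,3)] by blast
  obtain vs where vs: "acyclic_ordering (union_verts V k) A vs"
    "set (take (card V) vs) = Inl ` V" "set (drop (card V) vs) = Inr ` {..<k}"
    using simple_graphD(1)[OF assms(1)] A(1,3) by (rule acyclic_ordering_graph_vertices_first)
  have digraph_A: "digraph (union_verts V k) A"
    using A(1) by (simp add: acyclic_digraph_def)
  have "card V \<le> length vs"
  proof -
    have "card V = card (set (take (card V) vs))"
      using vs(2) card_image[OF inj_on_subset[OF inj_Inl subset_UNIV]] by metis
    also have "\<dots> \<le> length (take (card V) vs)" by (rule card_length)
    finally show ?thesis by simp
  qed
  then have len: "0 < length vs" "1 < length vs" using assms(2) by linarith+
  note in_nbhd_before = acyclic_ordering_in_nbhd_subset_take[OF vs(1) digraph_A]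
  have "in_nbhd A (vs ! 0) \<subseteq> set (take 0 vs)" "in_nbhd A (vs ! 1) \<subseteq> set (take 1 vs)"
    using in_nbhd_before[OF len(1)] in_nbhd_before[OF len(2)] .
  moreover have "take 1 vs = [vs ! 0]" using len(1) by (cases vs) auto
  ultimately have "in_nbhd A (vs ! 0) = {}" "in_nbhd A (vs ! 1) \<subseteq> {vs ! 0}" by simp_all
  then have "in_nbhd A (vs ! 0) = {}" "in_nbhd A (vs ! 1) = {}"
    using A(4) unfolding subset_singleton_iff by blast+
  then show ?thesis using A(1,2) vs by blast
qed

end
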